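(* Let $(T,\sigma)$ be a confluent temperature-1 TAS with maximal producible assembly $\alpha_{\max}$, and let $x\in\mathrm{Dom}(\alpha_{\max})$. Let $p$ be a finite free path such that there is an assembly (not necessarily producible) whose binding graph contains the path $x.p$ and which places the tile $\alpha_{\max}(x)$ at $x$. If $\mathrm{Dom}(x.p)\subseteq \mathrm{NC}(x)$, then the path $x.p$ is a subgraph of the binding graph of $\alpha_{\max}$.
   Context: Directions $D=\{E=(1,0),N=(0,1),S=(0,-1),W=(-1,0)\}$; $\mathbb Z^2$ is the grid graph; a free path is a word over $D$ whose associated walk is simple; $A.m$ is the path starting at $A$ following $m$; $\vec m$ is the displacement (sum of letters) of finite $m$. A tile type is a map $t:D\to\Sigma$ ($\Sigma$ a finite glue set), $t_d$ its glue on side $d$. A temperature-1 TAS is $(T,\sigma)$, $T$ finite set of tile types, $\sigma$ the seed tile type. An assembly is a partial map $\alpha:\mathbb Z^2\to T\cup\{\sigma\}$; its binding graph has vertices $\mathrm{Dom}(\alpha)$ and an edge $\{v,v+d\}$ iff $\alpha(v)_d=\alpha(v+d)_{-d}$; it is stable if the binding graph is connected, producible if stable and $\alpha((0,0))=\sigma$. The TAS is confluent if any two producible assemblies agree on their common domain; then there is a unique producible assembly $\alpha_{\max}$ whose domain contains the domain of every producible assembly. Non-causal set: for $x\in\mathbb Z^2$, $\mathrm{NC}(x)=\{y\in\mathbb Z^2: \exists$ a finite free path $m$ with $(0,0).m$ a subgraph of the binding graph of $\alpha_{\max}$, $(0,0)+\vec m=x$ and $y\notin \mathrm{Dom}((0,0).m)\}\cup\{x\}$.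 *)

theory Defs
  imports Main
begin

datatype dir = E | N | S | W

fun vec :: "dir \<Rightarrow> int \<times> int" where
  "vec E = (1, 0)" | "vec N = (0, 1)" | "vec S = (0, -1)" | "vec W = (-1, 0)"

fun opp :: "dir \<Rightarrow> dir" where
  "opp E = W" | "opp W = E" | "opp N = S" | "opp S = N"

definition padd :: "int \<times> int \<Rightarrow> int \<times> int \<Rightarrow> int \<times> int" where
  "padd u v = (fst u + fst v, snd u + snd v)"

definition disp :: "dir list \<Rightarrow> int \<times> int" where
  "disp m = foldr (\<lambda>d v. padd (vec d) v) m (0, 0)"

text \<open>The vertices of the walk A.m, in order: A, A + m_1, A + m_1 + m_2, ...\<close>
definition positions :: "int \<times> int \<Rightarrow> dir list \<Rightarrow> (int \<times> int) list" where
  "positions A m = map (\<lambda>i. padd A (disp (take i m))) [0..<Suc (length m)]"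

definition free_path :: "dir list \<Rightarrow> bool" where
  "free_path m \<longleftrightarrow> distinct (positions (0, 0) m)"

text \<open>Tile types (glue on each side) and assemblies (partial maps).\<close>
type_synonym 'g tile = "dir \<Rightarrow> 'g"
type_synonym 'g assembly = "int \<times> int \<Rightarrow> 'g tile option"

definition binds :: "'g assembly \<Rightarrow> int \<times> int \<Rightarrow> dir \<Rightarrow> bool" where
  "binds \<alpha> v d \<longleftrightarrow> (\<exists>a b. \<alpha> v = Some a \<and> \<alpha> (padd v (vec d)) = Some b \<and> a d = b (opp d))"

definition bind_rel :: "'g assembly \<Rightarrow> ((int \<times> int) \<times> (int \<times> int)) set" where
  "bind_rel \<alpha> = {(v, padd v (vec d)) | v d. binds \<alpha> v d}"

definition path_in :: "'g assembly \<Rightarrow> int \<times> int \<Rightarrow> dir list \<Rightarrow> bool" where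
  "path_in \<alpha> A m \<longleftrightarrow> set (positions A m) \<subseteq> dom \<alpha> \<and>
     (\<forall>i < length m. binds \<alpha> (positions A m ! i) (m ! i))"

definition is_assembly :: "'g tile set \<Rightarrow> 'g tile \<Rightarrow> 'g assembly \<Rightarrow> bool" where
  "is_assembly T \<sigma> \<alpha> \<longleftrightarrow> ran \<alpha> \<subseteq> insert \<sigma> T"

definition stable :: "'g assembly \<Rightarrow> bool" where
  "stable \<alpha> \<longleftrightarrow> (\<forall>u \<in> dom \<alpha>. \<forall>v \<in> dom \<alpha>. (u, v) \<in> (bind_rel \<alpha>)\<^sup>*)"

definition producible :: "'g tile set \<Rightarrow> 'g tile \<Rightarrow> 'g assembly \<Rightarrow> bool" where
  "producible T \<sigma> \<alpha> \<longleftrightarrow> is_assembly T \<sigma> \<alpha> \<and> stable \<alpha> \<and> \<alpha> (0, 0) = Some \<sigma>"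

definition confluent :: "'g tile set \<Rightarrow> 'g tile \<Rightarrow> bool" where
  "confluent T \<sigma> \<longleftrightarrow> (\<forall>\<alpha> \<beta>. producible T \<sigma> \<alpha> \<and> producible T \<sigma> \<beta> \<longrightarrow>
      (\<forall>v \<in> dom \<alpha> \<inter> dom \<beta>. \<alpha> v = \<beta> v))"

definition is_max_producible :: "'g tile set \<Rightarrow> 'g tile \<Rightarrow> 'g assembly \<Rightarrow> bool" where
  "is_max_producible T \<sigma> \<alpha> \<longleftrightarrow> producible T \<sigma> \<alpha> \<and>
     (\<forall>\<beta>. producible T \<sigma> \<beta> \<longrightarrow> dom \<beta> \<subseteq> dom \<alpha>)"

definition NC :: "'g assembly \<Rightarrow> int \<times> int \<Rightarrow> (int \<times> int) set" where
  "NC \<alpha>max x = {y. \<exists>m. free_path m \<and> path_in \<alpha>max (0, 0) m \<and> padd (0, 0) (disp m) = x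
       \<and> y \<notin> set (positions (0, 0) m)} \<union> {x}"

end

theory Submission
  imports Defs
begin

text \<open>
  Induction along \<open>x.p\<close>: suppose \<open>\<alpha>max\<close> and the assembly \<open>\<beta>\<close> carrying \<open>x.p\<close> agree on the
  first \<open>k\<close> vertices of \<open>x.p\<close>, and let \<open>y\<close> be the next one. As \<open>y \<in> NC(x)\<close> and \<open>y \<noteq> x\<close>,
  some path \<open>m\<close> of \<open>\<alpha>max\<close> from the seed to \<open>x\<close> avoids \<open>y\<close>. The assembly that copies
  \<open>\<alpha>max\<close> on \<open>m\<close> and on the first \<open>k\<close> vertices and places \<open>\<beta> y\<close> at \<open>y\<close> is connected via
  \<open>m\<close> followed by \<open>x.p\<close>, hence producible; confluence and maximality force \<open>\<alpha>max y = \<beta> y\<close>.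
\<close>

lemma padd_0_left [simp]: "padd (0, 0) v = v"
  by (simp add: padd_def)

lemma padd_assoc: "padd (padd u v) w = padd u (padd v w)"
  by (simp add: padd_def)

lemma disp_append: "disp (xs @ ys) = padd (disp xs) (disp ys)"
  by (induction xs) (auto simp: disp_def padd_def)

lemma disp_snoc: "disp (q @ [d]) = padd (disp q) (vec d)"
  by (simp add: disp_append) (simp add: disp_def padd_def)

lemma positions_snoc:
  "positions A (q @ [d]) = positions A q @ [padd (padd A (disp q)) (vec d)]"
  by (simp add: positions_def disp_snoc padd_assoc)

lemma positions_take: "positions A (take k m) = take (Suc k) (positions A m)"
  by (simp add: positions_def take_map min_def)

lemma length_positions [simp]: "length (positions A m) = Suc (length m)"
  by (simp add: positions_def)

lemma positions_Nil [simp]: "positions A [] = [A]"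
  by (simp add: positions_def disp_def padd_def)

lemma positions_nth:
  "j \<le> length m \<Longrightarrow> positions A m ! j = padd A (disp (take j m))"
  by (simp add: positions_def less_Suc_eq_le del: upt_Suc)

lemma positions_Suc_nth:
  "i < length m \<Longrightarrow> positions A m ! Suc i = padd (positions A m ! i) (vec (m ! i))"
  by (simp add: positions_nth take_Suc_conv_app_nth disp_snoc padd_assoc)

lemma start_in_positions: "A \<in> set (positions A m)"
  using nth_mem[of 0 "positions A m"] positions_nth[of 0 m A] by (simp add: disp_def padd_def)

lemma end_in_positions: "padd A (disp m) \<in> set (positions A m)"
  by (simp add: positions_def)

lemma distinct_positions: "free_path p \<Longrightarrow> distinct (positions x p)"
proof -
  assume "free_path p"
  have "positions x p = map (padd x) (positions (0, 0) p)"
    by (simp add: positions_def padd_def)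
  moreover have "inj (padd x)"
    by (auto simp: inj_on_def padd_def)
  ultimately show ?thesis
    using \<open>free_path p\<close> by (simp add: free_path_def distinct_map inj_on_subset[of _ UNIV])
qed

lemma binds_cong:
  "\<delta> v = \<alpha> v \<Longrightarrow> \<delta> (padd v (vec d)) = \<alpha> (padd v (vec d)) \<Longrightarrow> binds \<alpha> v d \<Longrightarrow> binds \<delta> v d"
  by (simp add: binds_def)

lemma binds_dom: "binds \<alpha> v d \<Longrightarrow> v \<in> dom \<alpha> \<and> padd v (vec d) \<in> dom \<alpha>"
  by (auto simp: binds_def)

lemma sym_bind_rel: "sym (bind_rel \<alpha>)"
proof (rule symI)
  fix u w assume "(u, w) \<in> bind_rel \<alpha>"
  then obtain d where d: "w = padd u (vec d)" "binds \<alpha> u d"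
    by (auto simp: bind_rel_def)
  have undo: "padd (padd u (vec d)) (vec (opp d)) = u" and "opp (opp d) = d"
    by (cases d; simp add: padd_def)+
  then have "binds \<alpha> w (opp d)"
    using d by (auto simp: binds_def)
  then show "(w, u) \<in> bind_rel \<alpha>"
    unfolding bind_rel_def using undo d(1) by force
qed

lemma path_in_snoc:
  "path_in \<alpha> A (q @ [d]) \<longleftrightarrow> path_in \<alpha> A q \<and> binds \<alpha> (padd A (disp q)) d"
  by (auto simp: path_in_def positions_snoc nth_append less_Suc_eq positions_nth
      dest: binds_dom)

lemma path_in_prefix: "path_in \<alpha> A (q @ r) \<Longrightarrow> path_in \<alpha> A q"
  by (induction r rule: rev_induct) (simp_all add: path_in_snoc flip: append_assoc)

lemma path_in_cong:
  assumes "\<forall>v \<in> set (positions A m). \<delta> v = \<alpha> v" and "path_in \<alpha> A m"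
  shows "path_in \<delta> A m"
  unfolding path_in_def
proof
  show "set (positions A m) \<subseteq> dom \<delta>"
    using assms unfolding path_in_def by (auto simp: domIff)
  show "\<forall>i < length m. binds \<delta> (positions A m ! i) (m ! i)"
  proof (intro allI impI)
    fix i assume i: "i < length m"
    have "positions A m ! i \<in> set (positions A m)" "positions A m ! Suc i \<in> set (positions A m)"
      using i by simp_all
    then show "binds \<delta> (positions A m ! i) (m ! i)"
      using assms i binds_cong positions_Suc_nth unfolding path_in_def by metis
  qed
qed

lemma path_in_reaches:
  "path_in \<alpha> A m \<Longrightarrow> v \<in> set (positions A m) \<Longrightarrow> (A, v) \<in> (bind_rel \<alpha>)\<^sup>*"
proof (induction m arbitrary: v rule: rev_induct)
  case (snoc d q)
  have q: "path_in \<alpha> A q" and edge: "binds \<alpha> (padd A (disp q)) d"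
    using snoc.prems(1) by (simp_all add: path_in_snoc)
  have "(A, padd A (disp q)) \<in> (bind_rel \<alpha>)\<^sup>*"
    using snoc.IH[OF q] end_in_positions by blast
  moreover have "(padd A (disp q), padd (padd A (disp q)) (vec d)) \<in> bind_rel \<alpha>"
    using edge unfolding bind_rel_def by blast
  moreover have "v = padd (padd A (disp q)) (vec d) \<or> v \<in> set (positions A q)"
    using snoc.prems(2) by (simp add: positions_snoc)
  ultimately show ?case
    using snoc.IH[OF q] by (metis rtrancl.rtrancl_into_rtrancl)
qed simp

lemma path_in_concat_reaches:
  assumes "path_in \<alpha> A m" "path_in \<alpha> (padd A (disp m)) q"
    and "v \<in> set (positions A m) \<union> set (positions (padd A (disp m)) q)"
  shows "(A, v) \<in> (bind_rel \<alpha>)\<^sup>*"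
proof -
  have "(A, padd A (disp m)) \<in> (bind_rel \<alpha>)\<^sup>*"
    using path_in_reaches[OF assms(1) end_in_positions] .
  then show ?thesis
    using assms path_in_reaches rtrancl_trans by (metis Un_iff)
qed

lemma stable_if_reachable:
  assumes "\<forall>v \<in> dom \<gamma>. (r, v) \<in> (bind_rel \<gamma>)\<^sup>*"
  shows "stable \<gamma>"
  unfolding stable_def
proof (intro ballI)
  fix u v assume "u \<in> dom \<gamma>" "v \<in> dom \<gamma>"
  then have "(u, r) \<in> (bind_rel \<gamma>)\<^sup>*" "(r, v) \<in> (bind_rel \<gamma>)\<^sup>*"
    using assms sym_rtrancl[OF sym_bind_rel] by (auto dest: symD)
  then show "(u, v) \<in> (bind_rel \<gamma>)\<^sup>*"
    by (rule rtrancl_trans)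
qed

lemma producible_if_reachable:
  assumes "is_assembly T \<sigma> \<gamma>" "\<gamma> (0, 0) = Some \<sigma>"
    and "\<forall>v \<in> dom \<gamma>. ((0, 0), v) \<in> (bind_rel \<gamma>)\<^sup>*"
  shows "producible T \<sigma> \<gamma>"
  using assms stable_if_reachable by (simp add: producible_def)

lemma max_producible_agrees:
  assumes "confluent T \<sigma>" "is_max_producible T \<sigma> \<alpha>" "producible T \<sigma> \<gamma>" "v \<in> dom \<gamma>"
  shows "\<alpha> v = \<gamma> v"
  using assms unfolding confluent_def is_max_producible_def by blast

lemma agreement_extends_along_path:
  assumes conf: "confluent T \<sigma>" and max: "is_max_producible T \<sigma> \<alpha>"
    and \<beta>: "is_assembly T \<sigma> \<beta>"
    and m: "path_in \<alpha> (0, 0) m" "disp m = x"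
    and qd: "path_in \<beta> x (q @ [d])"
    and agree: "\<forall>v \<in> set (positions x q). \<alpha> v = \<beta> v"
    and y: "y = padd (padd x (disp q)) (vec d)"
    and fresh: "y \<notin> set (positions (0, 0) m) \<union> set (positions x q)"
  shows "\<alpha> y = \<beta> y"
proof -
  define P where "P = set (positions (0, 0) m) \<union> set (positions x q)"
  define \<gamma> where "\<gamma> = (\<alpha> |` P)(y := \<beta> y)"
  have \<gamma>_P: "\<forall>v \<in> P. \<gamma> v = \<alpha> v"
    using fresh by (simp add: \<gamma>_def P_def)
  have q_\<beta>: "path_in \<beta> x q" and edge: "binds \<beta> (padd x (disp q)) d"
    using qd by (simp_all add: path_in_snoc)
  have "path_in \<alpha> x q"
    using path_in_cong[OF agree q_\<beta>] .
  then have "path_in \<gamma> x q"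
    by (rule path_in_cong[rotated]) (simp add: \<gamma>_P P_def)
  moreover have "binds \<gamma> (padd x (disp q)) d"
    using binds_cong[OF _ _ edge] agree \<gamma>_P end_in_positions y by (simp add: \<gamma>_def P_def)
  ultimately have \<gamma>_qd: "path_in \<gamma> x (q @ [d])"
    by (simp add: path_in_snoc)
  have \<gamma>_m: "path_in \<gamma> (0, 0) m"
    using m(1) by (rule path_in_cong[rotated]) (simp add: \<gamma>_P P_def)
  have dom_\<gamma>: "dom \<gamma> \<subseteq> set (positions (0, 0) m) \<union> set (positions x (q @ [d]))"
    by (auto simp: \<gamma>_def P_def positions_snoc y restrict_map_def split: if_splits)
  then have reach: "\<forall>v \<in> dom \<gamma>. ((0, 0), v) \<in> (bind_rel \<gamma>)\<^sup>*"
    using path_in_concat_reaches[OF \<gamma>_m] \<gamma>_qd m(2) by auto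
  have seed: "\<gamma> (0, 0) = Some \<sigma>"
    using \<gamma>_P start_in_positions max by (simp add: P_def is_max_producible_def producible_def)
  have "ran \<gamma> \<subseteq> ran \<alpha> \<union> ran \<beta>"
    by (auto simp: \<gamma>_def ran_def restrict_map_def split: if_splits)
  then have "is_assembly T \<sigma> \<gamma>"
    using \<beta> max unfolding is_assembly_def is_max_producible_def producible_def by blast
  then have \<gamma>_producible: "producible T \<sigma> \<gamma>"
    using seed reach by (rule producible_if_reachable)
  have "y \<in> dom \<gamma>"
    using binds_dom[OF edge] y by (simp add: \<gamma>_def domIff)
  then have "\<alpha> y = \<gamma> y"
    by (rule max_producible_agrees[OF conf max \<gamma>_producible])
  then show ?thesis
    by (simp add: \<gamma>_def)
qed

lemma max_producible_agrees_on_noncausal_path: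
  assumes conf: "confluent T \<sigma>" and max: "is_max_producible T \<sigma> \<alpha>"
    and \<beta>: "is_assembly T \<sigma> \<beta>" "path_in \<beta> x p" "\<beta> x = \<alpha> x"
    and free: "free_path p"
    and noncausal: "set (positions x p) \<subseteq> NC \<alpha> x"
  shows "\<forall>v \<in> set (positions x p). \<alpha> v = \<beta> v"
proof -
  have "\<forall>v \<in> set (positions x (take k p)). \<alpha> v = \<beta> v" if "k \<le> length p" for k
    using that
  proof (induction k)
    case (Suc k)
    define q d where "q = take k p" and "d = p ! k"
    define y where "y = padd (padd x (disp q)) (vec d)"
    have prefix: "take (Suc k) p = q @ [d]"
      using Suc.prems by (simp add: q_def d_def take_Suc_conv_app_nth)
    then have positions_prefix: "positions x (take (Suc k) p) = positions x q @ [y]"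
      by (simp add: positions_snoc y_def)
    moreover have "distinct (positions x (take (Suc k) p))"
      using distinct_positions[OF free] by (simp add: positions_take)
    ultimately have y_new: "y \<notin> set (positions x q)" and "y \<noteq> x"
      using start_in_positions[of x q] by auto
    have "y \<in> NC \<alpha> x"
      using noncausal positions_prefix set_take_subset[of "Suc (Suc k)" "positions x p"]
      by (auto simp: positions_take)
    then obtain m where m: "path_in \<alpha> (0, 0) m" "disp m = x" "y \<notin> set (positions (0, 0) m)"
      using \<open>y \<noteq> x\<close> unfolding NC_def by auto
    have "path_in \<beta> x (take (Suc k) p)"
      using \<beta>(2) path_in_prefix[of \<beta> x "take (Suc k) p" "drop (Suc k) p"] by simp
    then have "path_in \<beta> x (q @ [d])"
      by (simp only: prefix)
    moreover have agree_q: "\<forall>v \<in> set (positions x q). \<alpha> v = \<beta> v"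
      using Suc.IH Suc.prems by (simp add: q_def)
    moreover have "y \<notin> set (positions (0, 0) m) \<union> set (positions x q)"
      using y_new m(3) by blast
    ultimately have "\<alpha> y = \<beta> y"
      using agreement_extends_along_path[OF conf max \<beta>(1) m(1,2)] y_def by blast
    then show ?case
      using agree_q positions_prefix by simp
  qed (simp add: \<beta>(3))
  from this[of "length p"] show ?thesis
    by simp
qed

theorem mainTheorem3:
  fixes T :: "('g::finite) tile set" and \<sigma> :: "'g tile"
    and \<alpha>max :: "'g assembly" and x :: "int \<times> int" and p :: "dir list"
  assumes "finite T"
    and "confluent T \<sigma>"
    and "is_max_producible T \<sigma> \<alpha>max"
    and "x \<in> dom \<alpha>max"
    and "free_path p"
    and "\<exists>\<beta>. is_assembly T \<sigma> \<beta> \<and> path_in \<beta> x p \<and> \<beta> x = \<alpha>max x"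
    and "set (positions x p) \<subseteq> NC \<alpha>max x"
  shows "path_in \<alpha>max x p"
proof -
  obtain \<beta> where \<beta>: "is_assembly T \<sigma> \<beta>" "path_in \<beta> x p" "\<beta> x = \<alpha>max x"
    using assms(6) by blast
  have "\<forall>v \<in> set (positions x p). \<alpha>max v = \<beta> v"
    by (rule max_producible_agrees_on_noncausal_path[OF assms(2,3) \<beta> assms(5,7)])
  then show ?thesis
    using \<beta>(2) by (rule path_in_cong)
qed

end
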